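(* Let $(S,\mathcal F,\mathcal L)$ be a $p$-local finite group and let $A\le Z(S)$ be $\mathcal F$-weakly closed. Then $\mathrm{Foc}(\mathcal F)=\mathrm{Foc}(N_{\mathcal F}(A))$.
   Context: A subgroup of $S$ is $\mathcal F$-weakly closed if no other subgroup of $S$ is $\mathcal F$-conjugate to it. For $Q\le S$, the normalizer fusion system $N_{\mathcal F}(Q)$ is the fusion system over $N_S(Q)$ with $\mathrm{Hom}_{N_{\mathcal F}(Q)}(P,P')=\{\phi\in\mathrm{Hom}_{\mathcal F}(P,P')\mid \exists\psi\in\mathrm{Hom}_{\mathcal F}(PQ,P'Q),\ \psi|_P=\phi,\ \psi(Q)\le Q\}$. For a fusion system $\mathcal E$ over a $p$-group $T$, the focal subgroup is $\mathrm{Foc}(\mathcal E)=\langle g^{-1}\alpha(g)\mid g\in P\le T,\ \alpha\in\mathrm{Aut}_{\mathcal E}(P)\rangle$. Let $p$ be a prime and $S$ a finite $p$-group. For $P,Q\le S$, $\mathrm{Hom}_S(P,Q)$ is the set of maps $c_g\colon x\mapsto gxg^{-1}$ with $g\in S$, $gPg^{-1}\le Q$, and $\mathrm{Aut}_S(P)=\mathrm{Hom}_S(P,P)$. A fusion system $\mathcal F$ over $S$ is a category whose objects are the subgroups of $S$, with $\mathrm{Hom}_S(P,Q)\subseteq\mathrm{Hom}_{\mathcal F}(P,Q)\subseteq \mathrm{Inj}(P,Q)$, such that every morphism factors as an $\mathcal F$-isomorphism followed by an inclusion. Subgroups are $\mathcal F$-conjugate if they are isomorphic in $\mathcal F$.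 $P$ is fully centralized (resp. fully normalized) if $|C_S(P)|\ge |C_S(P')|$ (resp. $|N_S(P)|\ge|N_S(P')|$) for all $P'$ $\mathcal F$-conjugate to $P$. $\mathcal F$ is saturated if (I) every fully normalized $P$ is fully centralized and $\mathrm{Aut}_S(P)$ is a Sylow $p$-subgroup of $\mathrm{Aut}_{\mathcal F}(P)$, and (II) whenever $\phi\in\mathrm{Hom}_{\mathcal F}(P,S)$ with $\phi(P)$ fully centralized, $\phi$ extends to a morphism in $\mathcal F$ defined on $N_\phi=\{g\in N_S(P):\phi c_g\phi^{-1}\in \mathrm{Aut}_S(\phi(P))\}$. $P$ is $\mathcal F$-centric if $C_S(P')\le P'$ for all $P'$ $\mathcal F$-conjugate to $P$; $\mathcal F^c$ is the full subcategory on these. A centric linking system associated to $\mathcal F$ is a category $\mathcal L$ with objects the $\mathcal F$-centric subgroups, a functor $\pi\colon\mathcal L\to\mathcal F^c$ which is the identity on objects, and monomorphisms $\delta_P\colon P\to\mathrm{Aut}_{\mathcal L}(P)$, such that (A) $Z(P)$ (via $\delta_P$) acts freely on $\mathrm{Mor}_{\mathcal L}(P,Q)$ by composition and $\pi$ induces a bijection $\mathrm{Mor}_{\mathcal L}(P,Q)/Z(P)\to\mathrm{Hom}_{\mathcal F}(P,Q)$; (B) $\pi(\delta_P(g))=c_g$ for $g\in P$; (C) $f\circ\delta_P(g)=\delta_Q(\pi(f)(g))\circ f$ for $f\in\mathrm{Mor}_{\mathcal L}(P,Q)$, $g\in P$. A $p$-local finite group is a triple $(S,\mathcal F,\mathcal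 L)$ with $\mathcal F$ a saturated fusion system over $S$ and $\mathcal L$ an associated centric linking system. *)

theory Defs
  imports "HOL-Algebra.Algebra" "HOL-Library.FuncSet"
begin

text \<open>Subgroups of S are subsets of carrier S; a morphism P -> Q is represented
  by a function 'a => 'a that is extensional on P (undefined outside P).
  A fusion system is a map F with F P Q = Hom_F(P,Q).\<close>

definition p_group :: "nat \<Rightarrow> ('a, 'b) monoid_scheme \<Rightarrow> bool" where
  "p_group p S \<longleftrightarrow> Factorial_Ring.prime p \<and> group S \<and> finite (carrier S) \<and> (\<exists>n. order S = p ^ n)"

definition conjmap :: "('a, 'b) monoid_scheme \<Rightarrow> 'a \<Rightarrow> 'a \<Rightarrow> 'a" where
  "conjmap S g = (\<lambda>x. g \<otimes>\<^bsub>S\<^esub> x \<otimes>\<^bsub>S\<^esub> inv\<^bsub>S\<^esub> g)"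

definition hom_S :: "('a, 'b) monoid_scheme \<Rightarrow> 'a set \<Rightarrow> 'a set \<Rightarrow> ('a \<Rightarrow> 'a) set" where
  "hom_S S P Q = {restrict (conjmap S g) P | g. g \<in> carrier S \<and> conjmap S g ` P \<subseteq> Q}"

definition inj_hom :: "('a, 'b) monoid_scheme \<Rightarrow> 'a set \<Rightarrow> 'a set \<Rightarrow> ('a \<Rightarrow> 'a) set" where
  "inj_hom S P Q = {\<phi>. \<phi> \<in> extensional P \<and> \<phi> ` P \<subseteq> Q \<and> inj_on \<phi> P \<and>
      (\<forall>x\<in>P. \<forall>y\<in>P. \<phi> (x \<otimes>\<^bsub>S\<^esub> y) = \<phi> x \<otimes>\<^bsub>S\<^esub> \<phi> y)}"

definition centralizer :: "('a, 'b) monoid_scheme \<Rightarrow> 'a set \<Rightarrow> 'a set" where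
  "centralizer S P = {g \<in> carrier S. \<forall>x\<in>P. g \<otimes>\<^bsub>S\<^esub> x = x \<otimes>\<^bsub>S\<^esub> g}"

definition normalizer :: "('a, 'b) monoid_scheme \<Rightarrow> 'a set \<Rightarrow> 'a set" where
  "normalizer S P = {g \<in> carrier S. conjmap S g ` P = P}"

definition center :: "('a, 'b) monoid_scheme \<Rightarrow> 'a set \<Rightarrow> 'a set" where
  "center S P = {z \<in> P. \<forall>x\<in>P. z \<otimes>\<^bsub>S\<^esub> x = x \<otimes>\<^bsub>S\<^esub> z}"

text \<open>F is a fusion system over S: a category (closed under composition) on the
  subgroups of S with Hom_S <= Hom_F <= Inj, in which every morphism factors as an
  F-isomorphism (a morphism whose inverse is in F) followed by an inclusion.\<close>
definition fusion_system :: "('a, 'b) monoid_scheme \<Rightarrow> ('a set \<Rightarrow> 'a set \<Rightarrow> ('a \<Rightarrow> 'a) set) \<Rightarrow> bool" where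
  "fusion_system S F \<longleftrightarrow>
     (\<forall>P Q. subgroup P S \<longrightarrow> subgroup Q S \<longrightarrow>
        hom_S S P Q \<subseteq> F P Q \<and> F P Q \<subseteq> inj_hom S P Q) \<and>
     (\<forall>P Q R \<phi> \<psi>. subgroup P S \<longrightarrow> subgroup Q S \<longrightarrow> subgroup R S \<longrightarrow>
        \<phi> \<in> F P Q \<longrightarrow> \<psi> \<in> F Q R \<longrightarrow> compose P \<psi> \<phi> \<in> F P R) \<and>
     (\<forall>P Q \<phi>. subgroup P S \<longrightarrow> subgroup Q S \<longrightarrow> \<phi> \<in> F P Q \<longrightarrow>
        \<phi> \<in> F P (\<phi> ` P) \<and> restrict (inv_into P \<phi>) (\<phi> ` P) \<in> F (\<phi> ` P) P)"

definition fconj :: "('a, 'b) monoid_scheme \<Rightarrow> ('a set \<Rightarrow> 'a set \<Rightarrow> ('a \<Rightarrow> 'a) set) \<Rightarrow> 'a set \<Rightarrow> 'a set \<Rightarrow> bool" where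
  "fconj S F P P' \<longleftrightarrow> subgroup P S \<and> subgroup P' S \<and> (\<exists>\<phi>\<in>F P P'. \<phi> ` P = P')"

definition weakly_closed :: "('a, 'b) monoid_scheme \<Rightarrow> ('a set \<Rightarrow> 'a set \<Rightarrow> ('a \<Rightarrow> 'a) set) \<Rightarrow> 'a set \<Rightarrow> bool" where
  "weakly_closed S F A \<longleftrightarrow> subgroup A S \<and> (\<forall>A'. fconj S F A A' \<longrightarrow> A' = A)"

definition fully_centralized :: "('a, 'b) monoid_scheme \<Rightarrow> ('a set \<Rightarrow> 'a set \<Rightarrow> ('a \<Rightarrow> 'a) set) \<Rightarrow> 'a set \<Rightarrow> bool" where
  "fully_centralized S F P \<longleftrightarrow>
     (\<forall>P'. fconj S F P P' \<longrightarrow> card (centralizer S P') \<le> card (centralizer S P))"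

definition fully_normalized :: "('a, 'b) monoid_scheme \<Rightarrow> ('a set \<Rightarrow> 'a set \<Rightarrow> ('a \<Rightarrow> 'a) set) \<Rightarrow> 'a set \<Rightarrow> bool" where
  "fully_normalized S F P \<longleftrightarrow>
     (\<forall>P'. fconj S F P P' \<longrightarrow> card (normalizer S P') \<le> card (normalizer S P))"

definition aut_group :: "('a set \<Rightarrow> 'a set \<Rightarrow> ('a \<Rightarrow> 'a) set) \<Rightarrow> 'a set \<Rightarrow> ('a \<Rightarrow> 'a) monoid" where
  "aut_group F P = \<lparr>carrier = F P P, monoid.mult = compose P, one = restrict id P\<rparr>"

definition sylow_subgroup :: "nat \<Rightarrow> ('c, 'd) monoid_scheme \<Rightarrow> 'c set \<Rightarrow> bool" where
  "sylow_subgroup p G H \<longleftrightarrow> subgroup H G \<and> card H = p ^ multiplicity p (order G)"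

text \<open>N_phi = {g in N_S(P) : phi c_g phi^-1 in Aut_S(phi(P))}.\<close>
definition N_phi :: "('a, 'b) monoid_scheme \<Rightarrow> 'a set \<Rightarrow> ('a \<Rightarrow> 'a) \<Rightarrow> 'a set" where
  "N_phi S P \<phi> = {g \<in> normalizer S P. \<exists>h\<in>carrier S. conjmap S h ` (\<phi> ` P) = \<phi> ` P \<and>
       (\<forall>x\<in>P. \<phi> (conjmap S g x) = conjmap S h (\<phi> x))}"

definition saturated :: "nat \<Rightarrow> ('a, 'b) monoid_scheme \<Rightarrow> ('a set \<Rightarrow> 'a set \<Rightarrow> ('a \<Rightarrow> 'a) set) \<Rightarrow> bool" where
  "saturated p S F \<longleftrightarrow> fusion_system S F \<and>
     (\<forall>P. subgroup P S \<longrightarrow> fully_normalized S F P \<longrightarrow>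
        fully_centralized S F P \<and> sylow_subgroup p (aut_group F P) (hom_S S P P)) \<and>
     (\<forall>P \<phi>. subgroup P S \<longrightarrow> \<phi> \<in> F P (carrier S) \<longrightarrow> fully_centralized S F (\<phi> ` P) \<longrightarrow>
        (\<exists>\<psi>\<in>F (N_phi S P \<phi>) (carrier S). \<forall>x\<in>P. \<psi> x = \<phi> x))"

definition centric :: "('a, 'b) monoid_scheme \<Rightarrow> ('a set \<Rightarrow> 'a set \<Rightarrow> ('a \<Rightarrow> 'a) set) \<Rightarrow> 'a set \<Rightarrow> bool" where
  "centric S F P \<longleftrightarrow> subgroup P S \<and> (\<forall>P'. fconj S F P P' \<longrightarrow> centralizer S P' \<subseteq> P')"

text \<open>Mor P Q = Mor_L(P,Q); cmp P Q R g f = g o f for f : P -> Q, g : Q -> R;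
  idm P = identity of P; proj P Q f = proj(f) in Hom_F(P,Q); delta P g = delta_P(g).\<close>
definition linking_system ::
  "('a, 'b) monoid_scheme \<Rightarrow> ('a set \<Rightarrow> 'a set \<Rightarrow> ('a \<Rightarrow> 'a) set) \<Rightarrow>
   ('a set \<Rightarrow> 'a set \<Rightarrow> 'm set) \<Rightarrow> ('a set \<Rightarrow> 'a set \<Rightarrow> 'a set \<Rightarrow> 'm \<Rightarrow> 'm \<Rightarrow> 'm) \<Rightarrow>
   ('a set \<Rightarrow> 'm) \<Rightarrow> ('a set \<Rightarrow> 'a set \<Rightarrow> 'm \<Rightarrow> ('a \<Rightarrow> 'a)) \<Rightarrow> ('a set \<Rightarrow> 'a \<Rightarrow> 'm) \<Rightarrow> bool" where
  "linking_system S F Mor cmp idm proj delta \<longleftrightarrow>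
   \<comment> \<open>category structure\<close>
   (\<forall>P Q R f g. centric S F P \<longrightarrow> centric S F Q \<longrightarrow> centric S F R \<longrightarrow>
      f \<in> Mor P Q \<longrightarrow> g \<in> Mor Q R \<longrightarrow> cmp P Q R g f \<in> Mor P R) \<and>
   (\<forall>P Q R T f g h. centric S F P \<longrightarrow> centric S F Q \<longrightarrow> centric S F R \<longrightarrow> centric S F T \<longrightarrow>
      f \<in> Mor P Q \<longrightarrow> g \<in> Mor Q R \<longrightarrow> h \<in> Mor R T \<longrightarrow>
      cmp P R T h (cmp P Q R g f) = cmp P Q T (cmp Q R T h g) f) \<and>
   (\<forall>P. centric S F P \<longrightarrow> idm P \<in> Mor P P) \<and>
   (\<forall>P Q f. centric S F P \<longrightarrow> centric S F Q \<longrightarrow> f \<in> Mor P Q \<longrightarrow>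
      cmp P P Q f (idm P) = f \<and> cmp P Q Q (idm Q) f = f) \<and>
   \<comment> \<open>proj is a functor to F^c, identity on objects\<close>
   (\<forall>P Q f. centric S F P \<longrightarrow> centric S F Q \<longrightarrow> f \<in> Mor P Q \<longrightarrow> proj P Q f \<in> F P Q) \<and>
   (\<forall>P Q R f g. centric S F P \<longrightarrow> centric S F Q \<longrightarrow> centric S F R \<longrightarrow>
      f \<in> Mor P Q \<longrightarrow> g \<in> Mor Q R \<longrightarrow>
      proj P R (cmp P Q R g f) = compose P (proj Q R g) (proj P Q f)) \<and>
   (\<forall>P. centric S F P \<longrightarrow> proj P P (idm P) = restrict id P) \<and>
   \<comment> \<open>delta_P : P -> Aut_L(P) is a monomorphism of groups\<close>
   (\<forall>P. centric S F P \<longrightarrow>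
      (\<forall>g\<in>P. delta P g \<in> Mor P P) \<and>
      (\<forall>g\<in>P. \<forall>h\<in>P. delta P (g \<otimes>\<^bsub>S\<^esub> h) = cmp P P P (delta P g) (delta P h)) \<and>
      delta P \<one>\<^bsub>S\<^esub> = idm P \<and> inj_on (delta P) P) \<and>
   \<comment> \<open>(A) Z(P) acts freely on Mor(P,Q), and proj induces a bijection Mor(P,Q)/Z(P) -> Hom_F(P,Q)\<close>
   (\<forall>P Q. centric S F P \<longrightarrow> centric S F Q \<longrightarrow>
      (\<forall>f\<in>Mor P Q. \<forall>z\<in>center S P. cmp P P Q f (delta P z) = f \<longrightarrow> z = \<one>\<^bsub>S\<^esub>) \<and>
      proj P Q ` Mor P Q = F P Q \<and>
      (\<forall>f\<in>Mor P Q. \<forall>f'\<in>Mor P Q. proj P Q f = proj P Q f' \<longrightarrow>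
          (\<exists>z\<in>center S P. f' = cmp P P Q f (delta P z)))) \<and>
   \<comment> \<open>(B)\<close>
   (\<forall>P. centric S F P \<longrightarrow> (\<forall>g\<in>P. proj P P (delta P g) = restrict (conjmap S g) P)) \<and>
   \<comment> \<open>(C)\<close>
   (\<forall>P Q f g. centric S F P \<longrightarrow> centric S F Q \<longrightarrow> f \<in> Mor P Q \<longrightarrow> g \<in> P \<longrightarrow>
      cmp P P Q f (delta P g) = cmp P Q Q (delta Q (proj P Q f g)) f)"

definition p_local_finite_group ::
  "nat \<Rightarrow> ('a, 'b) monoid_scheme \<Rightarrow> ('a set \<Rightarrow> 'a set \<Rightarrow> ('a \<Rightarrow> 'a) set) \<Rightarrow>
   ('a set \<Rightarrow> 'a set \<Rightarrow> 'm set) \<Rightarrow> ('a set \<Rightarrow> 'a set \<Rightarrow> 'a set \<Rightarrow> 'm \<Rightarrow> 'm \<Rightarrow> 'm) \<Rightarrow>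
   ('a set \<Rightarrow> 'm) \<Rightarrow> ('a set \<Rightarrow> 'a set \<Rightarrow> 'm \<Rightarrow> ('a \<Rightarrow> 'a)) \<Rightarrow> ('a set \<Rightarrow> 'a \<Rightarrow> 'm) \<Rightarrow> bool" where
  "p_local_finite_group p S F Mor cmp idm proj delta \<longleftrightarrow>
     p_group p S \<and> saturated p S F \<and> linking_system S F Mor cmp idm proj delta"

text \<open>The normalizer fusion system N_F(Q) over N_S(Q) (for subgroups P, P' of N_S(Q)).\<close>
definition normalizer_fs :: "('a, 'b) monoid_scheme \<Rightarrow> ('a set \<Rightarrow> 'a set \<Rightarrow> ('a \<Rightarrow> 'a) set) \<Rightarrow>
    'a set \<Rightarrow> 'a set \<Rightarrow> 'a set \<Rightarrow> ('a \<Rightarrow> 'a) set" where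
  "normalizer_fs S F Q P P' = {\<phi> \<in> F P P'. \<exists>\<psi>\<in>F (P <#>\<^bsub>S\<^esub> Q) (P' <#>\<^bsub>S\<^esub> Q).
      (\<forall>x\<in>P. \<psi> x = \<phi> x) \<and> \<psi> ` Q \<subseteq> Q}"

definition focal :: "('a, 'b) monoid_scheme \<Rightarrow> 'a set \<Rightarrow> ('a set \<Rightarrow> 'a set \<Rightarrow> ('a \<Rightarrow> 'a) set) \<Rightarrow> 'a set" where
  "focal S T E = generate S {inv\<^bsub>S\<^esub> g \<otimes>\<^bsub>S\<^esub> \<alpha> g | g P \<alpha>.
      subgroup P S \<and> P \<subseteq> T \<and> g \<in> P \<and> \<alpha> \<in> E P P}"

end

theory Submission
  imports Defs
begin

text \<open>Since A is central, \<open>N\<^sub>S(A) = S\<close>, so it suffices to show that every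
  \<open>\<alpha> \<in> Aut\<^sub>F(P)\<close> extends to an F-automorphism of PA leaving A invariant.
  Choose an F-isomorphism \<open>\<phi>\<close> from P onto a fully centralized conjugate P'.
  Both \<open>\<phi>\<close> and \<open>\<phi> \<circ> \<alpha>\<close> have image P', and PA lies in their groups
  \<open>N\<^sub>\<phi>\<close> because A is central, so the extension axiom extends them to maps
  \<open>\<psi>, \<psi>'\<close> on PA. Weak closure forces \<open>\<psi>(A) = A = \<psi>'(A)\<close>; hence both map
  PA onto P'A, and \<open>\<psi>\<inverse> \<circ> \<psi>'\<close> is the required automorphism.\<close>

context group begin

lemma conjmap_one: "x \<in> carrier G \<Longrightarrow> conjmap G \<one> x = x"
  by (simp add: conjmap_def)

lemma conjmap_mult:
  "g \<in> carrier G \<Longrightarrow> h \<in> carrier G \<Longrightarrow> x \<in> carrier G \<Longrightarrow>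
    conjmap G (g \<otimes> h) x = conjmap G g (conjmap G h x)"
  by (simp add: conjmap_def m_assoc inv_mult_group)

lemma conjmap_inv_cancel:
  "g \<in> carrier G \<Longrightarrow> x \<in> carrier G \<Longrightarrow> conjmap G (inv g) (conjmap G g x) = x"
  by (simp add: conjmap_def m_assoc) (simp add: m_assoc[symmetric])

lemma conjmap_cancel_inv:
  "g \<in> carrier G \<Longrightarrow> x \<in> carrier G \<Longrightarrow> conjmap G g (conjmap G (inv g) x) = x"
  using conjmap_inv_cancel[of "inv g" x] by simp

lemma conjmap_by_central: "z \<in> center G (carrier G) \<Longrightarrow> x \<in> carrier G \<Longrightarrow> conjmap G z x = x"
  unfolding center_def conjmap_def by (auto simp: m_assoc)

lemma conjmap_fixes_central:
  assumes "z \<in> center G (carrier G)" "g \<in> carrier G"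
  shows "conjmap G g z = z"
proof -
  have z: "z \<in> carrier G" and comm: "g \<otimes> z = z \<otimes> g"
    using assms unfolding center_def by auto
  show ?thesis
    unfolding conjmap_def comm using z assms(2) by (simp add: m_assoc)
qed

lemma conjmap_image_one: "Y \<subseteq> carrier G \<Longrightarrow> conjmap G \<one> ` Y = Y"
  by (simp add: conjmap_one subset_eq cong: image_cong)

lemma conjmap_image_mult:
  "g \<in> carrier G \<Longrightarrow> h \<in> carrier G \<Longrightarrow> Y \<subseteq> carrier G \<Longrightarrow>
    conjmap G (g \<otimes> h) ` Y = conjmap G g ` conjmap G h ` Y"
  by (simp add: image_image conjmap_mult subset_eq cong: image_cong)

lemma conjmap_image_inv:
  assumes "g \<in> carrier G" "Y \<subseteq> carrier G" "conjmap G g ` Y = Y"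
  shows "conjmap G (inv g) ` Y = Y"
proof -
  have "conjmap G (inv g) ` Y = conjmap G (inv g) ` conjmap G g ` Y"
    using assms(3) by simp
  also have "\<dots> = (\<lambda>x. conjmap G (inv g) (conjmap G g x)) ` Y"
    by (simp add: image_image)
  also have "\<dots> = Y"
    using assms(1,2) by (auto simp: conjmap_inv_cancel subset_eq)
  finally show ?thesis .
qed

lemma conjmap_image_subgroup:
  assumes "subgroup P G" "g \<in> P"
  shows "conjmap G g ` P = P"
proof
  have closed: "conjmap G k x \<in> P" if "k \<in> P" "x \<in> P" for k x
    using assms(1) that by (simp add: conjmap_def subgroup.m_closed subgroup.m_inv_closed)
  show "conjmap G g ` P \<subseteq> P"
    using closed[OF assms(2)] by blast
  show "P \<subseteq> conjmap G g ` P"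
  proof
    fix x assume "x \<in> P"
    then have "x = conjmap G g (conjmap G (inv g) x)"
      using assms conjmap_cancel_inv by (simp add: subgroup.mem_carrier)
    then show "x \<in> conjmap G g ` P"
      using closed \<open>x \<in> P\<close> assms by (simp add: subgroup.m_inv_closed)
  qed
qed

lemma normalizer_subgroup: "P \<subseteq> carrier G \<Longrightarrow> subgroup (normalizer G P) G"
  unfolding normalizer_def
proof (rule subgroupI)
  assume "P \<subseteq> carrier G"
  then show "{g \<in> carrier G. conjmap G g ` P = P} \<noteq> {}"
    using conjmap_image_one by blast
qed (auto simp: conjmap_image_mult conjmap_image_inv)

lemma normalizer_central:
  assumes "A \<subseteq> center G (carrier G)"
  shows "normalizer G A = carrier G"
proof -
  have "conjmap G g ` A = A" if "g \<in> carrier G" for g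
    using assms that by (simp add: conjmap_fixes_central subset_eq cong: image_cong)
  then show ?thesis
    unfolding normalizer_def by blast
qed

lemma inj_hom_group_hom:
  assumes "subgroup P G" "\<phi> \<in> inj_hom G P (carrier G)"
  shows "group_hom (G\<lparr>carrier := P\<rparr>) G \<phi>"
proof -
  have "\<phi> \<in> hom (G\<lparr>carrier := P\<rparr>) G"
    using assms(2) unfolding inj_hom_def hom_def by auto
  then show ?thesis
    using subgroup_imp_group[OF assms(1)] is_group by (simp add: group_hom_def group_hom_axioms_def)
qed

lemma inj_hom_image_subgroup:
  assumes "subgroup P G" "\<phi> \<in> inj_hom G P (carrier G)"
  shows "subgroup (\<phi> ` P) G"
  using group_hom.img_is_subgroup[OF inj_hom_group_hom[OF assms]] by simp

lemma inj_hom_conjmap: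
  assumes "subgroup P G" "\<phi> \<in> inj_hom G P (carrier G)" "g \<in> P" "x \<in> P"
  shows "\<phi> (conjmap G g x) = conjmap G (\<phi> g) (\<phi> x)"
proof -
  interpret \<phi>: group_hom "G\<lparr>carrier := P\<rparr>" G \<phi>
    using inj_hom_group_hom[OF assms(1,2)] .
  have mult: "\<phi> (a \<otimes> b) = \<phi> a \<otimes> \<phi> b" if "a \<in> P" "b \<in> P" for a b
    using \<phi>.hom_mult that by simp
  have "\<phi> (inv g) = inv (\<phi> g)"
    using \<phi>.hom_inv assms(1,3) by (simp add: m_inv_consistent)
  then show ?thesis
    using assms(1,3,4) mult by (simp add: conjmap_def subgroup.m_closed subgroup.m_inv_closed)
qed

lemma inj_hom_image_set_mult:
  assumes "subgroup N G" "\<psi> \<in> inj_hom G N (carrier G)" "P \<subseteq> N" "A \<subseteq> N"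
  shows "\<psi> ` (P <#> A) = \<psi> ` P <#> \<psi> ` A"
  using set_mult_hom[OF group_hom.homh[OF inj_hom_group_hom[OF assms(1,2)]]] assms(3,4) by simp

lemma set_mult_subset_subgroup: "subgroup N G \<Longrightarrow> P \<subseteq> N \<Longrightarrow> A \<subseteq> N \<Longrightarrow> P <#> A \<subseteq> N"
  unfolding set_mult_def by (auto intro: subgroup.m_closed)

lemma central_subgroup_normal:
  assumes "subgroup A G" "A \<subseteq> center G (carrier G)"
  shows "A \<lhd> G"
  unfolding normal_inv_iff
proof (intro conjI ballI)
  fix x h assume "x \<in> carrier G" "h \<in> A"
  then show "x \<otimes> h \<otimes> inv x \<in> A"
    using conjmap_fixes_central[of h x] assms(2) unfolding conjmap_def by auto
qed (rule assms(1))

lemma set_mult_central: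
  assumes P: "subgroup P G" and A: "subgroup A G" "A \<subseteq> center G (carrier G)"
  shows "subgroup (P <#> A) G" "P \<subseteq> P <#> A" "A \<subseteq> P <#> A"
proof -
  interpret second_isomorphism_grp A G P
    using central_subgroup_normal[OF A] P
    unfolding second_isomorphism_grp_def second_isomorphism_grp_axioms_def by blast
  have "P <#> A = A <#> P"
    using commut_normal[OF P normal_axioms] .
  then show "subgroup (P <#> A) G" "P \<subseteq> P <#> A" "A \<subseteq> P <#> A"
    using normal_set_mult_subgroup H_contained_in_set_mult S_contained_in_set_mult by simp_all
qed

lemma N_phi_iff:
  "g \<in> N_phi G P \<phi> \<longleftrightarrow>
    g \<in> normalizer G P \<and> (\<exists>h\<in>carrier G. \<forall>x\<in>P. \<phi> (conjmap G g x) = conjmap G h (\<phi> x))"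
proof
  assume "g \<in> normalizer G P \<and> (\<exists>h\<in>carrier G. \<forall>x\<in>P. \<phi> (conjmap G g x) = conjmap G h (\<phi> x))"
  then obtain h where g: "conjmap G g ` P = P" and h: "h \<in> carrier G"
    and comm: "\<forall>x\<in>P. \<phi> (conjmap G g x) = conjmap G h (\<phi> x)"
    by (auto simp: normalizer_def)
  have "conjmap G h ` \<phi> ` P = \<phi> ` conjmap G g ` P"
    using comm by (simp add: image_image)
  with g h comm \<open>g \<in> normalizer G P \<and> _\<close> show "g \<in> N_phi G P \<phi>"
    unfolding N_phi_def by auto
qed (auto simp: N_phi_def)

lemma N_phiI:
  "g \<in> normalizer G P \<Longrightarrow> h \<in> carrier G \<Longrightarrow> \<forall>x\<in>P. \<phi> (conjmap G g x) = conjmap G h (\<phi> x) \<Longrightarrow>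
    g \<in> N_phi G P \<phi>"
  unfolding N_phi_iff by blast

lemma N_phiE:
  assumes "g \<in> N_phi G P \<phi>"
  obtains h where "g \<in> normalizer G P" "h \<in> carrier G"
    "\<forall>x\<in>P. \<phi> (conjmap G g x) = conjmap G h (\<phi> x)"
  using assms unfolding N_phi_iff by blast

lemma N_phi_inv_closed:
  assumes P: "P \<subseteq> carrier G" and \<phi>: "\<phi> ` P \<subseteq> carrier G" and "g \<in> N_phi G P \<phi>"
  shows "inv g \<in> N_phi G P \<phi>"
proof -
  obtain h where g: "g \<in> normalizer G P" and h: "h \<in> carrier G"
    and comm: "\<forall>x\<in>P. \<phi> (conjmap G g x) = conjmap G h (\<phi> x)"
    using assms(3) by (rule N_phiE)
  have gc: "g \<in> carrier G" and gP: "conjmap G (inv g) ` P = P"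
    using g conjmap_image_inv[OF _ P] unfolding normalizer_def by blast+
  have "\<phi> (conjmap G (inv g) x) = conjmap G (inv h) (\<phi> x)" if x: "x \<in> P" for x
  proof -
    have y: "conjmap G (inv g) x \<in> P"
      using gP x by (metis imageI)
    have "\<phi> x = \<phi> (conjmap G g (conjmap G (inv g) x))"
      using conjmap_cancel_inv[OF gc] x P by (simp add: subsetD)
    also have "\<dots> = conjmap G h (\<phi> (conjmap G (inv g) x))"
      using comm y by simp
    finally show ?thesis
      using conjmap_inv_cancel[OF h] y \<phi> by (simp add: image_subset_iff)
  qed
  then show ?thesis
    using subgroup.m_inv_closed[OF normalizer_subgroup[OF P] g] inv_closed[OF h]
    by (blast intro: N_phiI)
qed

lemma N_phi_mult_closed:
  assumes P: "P \<subseteq> carrier G" and \<phi>: "\<phi> ` P \<subseteq> carrier G"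
    and "g1 \<in> N_phi G P \<phi>" "g2 \<in> N_phi G P \<phi>"
  shows "g1 \<otimes> g2 \<in> N_phi G P \<phi>"
proof -
  obtain h1 h2 where g: "g1 \<in> normalizer G P" "g2 \<in> normalizer G P"
    and h: "h1 \<in> carrier G" "h2 \<in> carrier G"
    and comm: "\<forall>x\<in>P. \<phi> (conjmap G g1 x) = conjmap G h1 (\<phi> x)"
      "\<forall>x\<in>P. \<phi> (conjmap G g2 x) = conjmap G h2 (\<phi> x)"
    using assms(3,4) by (metis N_phiE)
  have gc: "g1 \<in> carrier G" "g2 \<in> carrier G" and g2P: "conjmap G g2 ` P = P"
    using g unfolding normalizer_def by blast+
  have "\<phi> (conjmap G (g1 \<otimes> g2) x) = conjmap G (h1 \<otimes> h2) (\<phi> x)" if x: "x \<in> P" for x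
  proof -
    have y: "conjmap G g2 x \<in> P"
      using g2P x by (metis imageI)
    have "\<phi> (conjmap G (g1 \<otimes> g2) x) = \<phi> (conjmap G g1 (conjmap G g2 x))"
      using x P gc by (simp add: conjmap_mult subsetD)
    also have "\<dots> = conjmap G h1 (conjmap G h2 (\<phi> x))"
      using comm x y by simp
    also have "\<dots> = conjmap G (h1 \<otimes> h2) (\<phi> x)"
      using x \<phi> h by (simp add: conjmap_mult image_subset_iff)
    finally show ?thesis .
  qed
  then show ?thesis
    using subgroup.m_closed[OF normalizer_subgroup[OF P] g] m_closed[OF h] by (blast intro: N_phiI)
qed

lemma N_phi_subgroup:
  assumes P: "P \<subseteq> carrier G" and \<phi>: "\<phi> ` P \<subseteq> carrier G"
  shows "subgroup (N_phi G P \<phi>) G"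
proof (rule subgroupI)
  have N: "subgroup (normalizer G P) G"
    using normalizer_subgroup[OF P] .
  show "N_phi G P \<phi> \<subseteq> carrier G"
    using subgroup.subset[OF N] by (auto elim: N_phiE)
  have "\<phi> (conjmap G \<one> x) = conjmap G \<one> (\<phi> x)" if "x \<in> P" for x
    using that P \<phi> by (simp add: conjmap_one image_subset_iff subsetD)
  then have "\<one> \<in> N_phi G P \<phi>"
    using subgroup.one_closed[OF N] by (blast intro: N_phiI)
  then show "N_phi G P \<phi> \<noteq> {}"
    by blast
qed (simp_all add: N_phi_inv_closed N_phi_mult_closed assms)

lemma set_mult_central_subset_N_phi:
  assumes P: "subgroup P G" and A: "subgroup A G" "A \<subseteq> center G (carrier G)"
    and \<phi>: "\<phi> \<in> inj_hom G P (carrier G)"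
  shows "P <#> A \<subseteq> N_phi G P \<phi>"
proof (rule set_mult_subset_subgroup)
  have Pc: "P \<subseteq> carrier G" and \<phi>P: "\<phi> ` P \<subseteq> carrier G"
    using subgroup.subset[OF P] \<phi> by (auto simp: inj_hom_def)
  show "subgroup (N_phi G P \<phi>) G"
    using N_phi_subgroup[OF Pc \<phi>P] .
  show "P \<subseteq> N_phi G P \<phi>"
  proof
    fix g assume g: "g \<in> P"
    have "g \<in> normalizer G P"
      using g Pc conjmap_image_subgroup[OF P g] by (auto simp: normalizer_def)
    moreover have "\<phi> g \<in> carrier G" "\<forall>x\<in>P. \<phi> (conjmap G g x) = conjmap G (\<phi> g) (\<phi> x)"
      using g \<phi>P inj_hom_conjmap[OF P \<phi> g] by auto
    ultimately show "g \<in> N_phi G P \<phi>"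
      by (blast intro: N_phiI)
  qed
  show "A \<subseteq> N_phi G P \<phi>"
  proof
    fix a assume "a \<in> A"
    then have "a \<in> center G (carrier G)"
      using A(2) by blast
    then have "conjmap G a ` P = P" "\<forall>x\<in>P. \<phi> (conjmap G a x) = conjmap G \<one> (\<phi> x)"
      using Pc \<phi>P by (simp_all add: conjmap_by_central conjmap_one subset_eq cong: image_cong)
    then have "a \<in> normalizer G P" "\<forall>x\<in>P. \<phi> (conjmap G a x) = conjmap G \<one> (\<phi> x)"
      using \<open>a \<in> center G (carrier G)\<close> by (auto simp: normalizer_def center_def)
    then show "a \<in> N_phi G P \<phi>"
      by (blast intro: N_phiI)
  qed
qed



end

locale fusion = group G for G (structure) +
  fixes F :: "'a set \<Rightarrow> 'a set \<Rightarrow> ('a \<Rightarrow> 'a) set"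
  assumes fusion_system: "fusion_system G F"
begin

lemma hom_S_subset: "subgroup P G \<Longrightarrow> subgroup Q G \<Longrightarrow> hom_S G P Q \<subseteq> F P Q"
  using fusion_system unfolding fusion_system_def by blast

lemma F_inj_hom: "subgroup P G \<Longrightarrow> subgroup Q G \<Longrightarrow> \<phi> \<in> F P Q \<Longrightarrow> \<phi> \<in> inj_hom G P Q"
  using fusion_system unfolding fusion_system_def by blast

lemma F_comp:
  "subgroup P G \<Longrightarrow> subgroup Q G \<Longrightarrow> subgroup R G \<Longrightarrow> \<phi> \<in> F P Q \<Longrightarrow> \<psi> \<in> F Q R \<Longrightarrow>
    compose P \<psi> \<phi> \<in> F P R"
  using fusion_system unfolding fusion_system_def by blast

lemma F_onto_image: "subgroup P G \<Longrightarrow> subgroup Q G \<Longrightarrow> \<phi> \<in> F P Q \<Longrightarrow> \<phi> \<in> F P (\<phi> ` P)"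
  using fusion_system unfolding fusion_system_def by blast

lemma F_inverse:
  "subgroup P G \<Longrightarrow> subgroup Q G \<Longrightarrow> \<phi> \<in> F P Q \<Longrightarrow>
    restrict (inv_into P \<phi>) (\<phi> ` P) \<in> F (\<phi> ` P) P"
  using fusion_system unfolding fusion_system_def by blast

lemma F_inj_hom_carrier:
  assumes "subgroup P G" "subgroup Q G" "\<phi> \<in> F P Q"
  shows "\<phi> \<in> inj_hom G P (carrier G)"
  using F_inj_hom[OF assms] subgroup.subset[OF assms(2)] unfolding inj_hom_def by blast

lemma F_image_subgroup:
  "subgroup P G \<Longrightarrow> subgroup Q G \<Longrightarrow> \<phi> \<in> F P Q \<Longrightarrow> subgroup (\<phi> ` P) G"
  using inj_hom_image_subgroup F_inj_hom_carrier by blast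

lemma F_inclusion:
  assumes "subgroup Q G" "subgroup N G" "Q \<subseteq> N"
  shows "restrict id Q \<in> F Q N"
proof -
  have "restrict (conjmap G \<one>) Q = restrict id Q"
    using subgroup.subset[OF assms(1)] by (intro restrict_ext) (auto simp: conjmap_one)
  moreover have "restrict (conjmap G \<one>) Q \<in> hom_S G Q N"
    using assms(3) conjmap_image_one[OF subgroup.subset[OF assms(1)]] unfolding hom_S_def by force
  ultimately show ?thesis
    using hom_S_subset[OF assms(1,2)] by auto
qed

lemma F_restrict:
  assumes "subgroup Q G" "subgroup N G" "subgroup R G" "Q \<subseteq> N" "\<psi> \<in> F N R"
  shows "restrict \<psi> Q \<in> F Q R"
proof -
  have "compose Q \<psi> (restrict id Q) = restrict \<psi> Q"
    unfolding compose_def by (intro restrict_ext) auto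
  then show ?thesis
    using F_comp[OF assms(1,2,3) F_inclusion[OF assms(1,2,4)] assms(5)] by simp
qed

lemma F_corestrict:
  assumes "subgroup P G" "subgroup Q G" "subgroup R G" "\<phi> \<in> F P Q" "\<phi> ` P \<subseteq> R"
  shows "\<phi> \<in> F P R"
proof -
  have im: "subgroup (\<phi> ` P) G"
    using F_image_subgroup[OF assms(1,2,4)] .
  have "\<phi> \<in> extensional P"
    using F_inj_hom[OF assms(1,2,4)] unfolding inj_hom_def by blast
  then have "compose P (restrict id (\<phi> ` P)) \<phi> = \<phi>"
    unfolding compose_def by (auto simp: extensional_def)
  then show ?thesis
    using F_comp[OF assms(1) im assms(3) F_onto_image[OF assms(1,2,4)] F_inclusion[OF im assms(3,5)]]
    by simp
qed

lemma fconj_refl: "subgroup P G \<Longrightarrow> fconj G F P P"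
  unfolding fconj_def using F_inclusion[of P P] by (auto intro!: bexI[of _ "restrict id P"])

lemma fconj_trans:
  assumes "fconj G F P Q" "fconj G F Q R"
  shows "fconj G F P R"
proof -
  obtain \<phi> \<psi> where "\<phi> \<in> F P Q" "\<phi> ` P = Q" "\<psi> \<in> F Q R" "\<psi> ` Q = R"
    and sub: "subgroup P G" "subgroup Q G" "subgroup R G"
    using assms unfolding fconj_def by blast
  moreover from this have "compose P \<psi> \<phi> ` P = R"
    unfolding compose_def by auto
  ultimately show ?thesis
    unfolding fconj_def using F_comp by blast
qed

lemma aut_in_normalizer_fs_of_extensions:
  assumes P: "subgroup P G" and A: "subgroup A G" "A \<subseteq> center G (carrier G)"
    and \<alpha>: "\<alpha> \<in> F P P"
    and \<psi>: "\<psi> \<in> F (P <#> A) (carrier G)" "\<psi> ` A = A"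
    and \<psi>': "\<psi>' \<in> F (P <#> A) (carrier G)" "\<psi>' ` A = A" "\<psi>' ` (P <#> A) = \<psi> ` (P <#> A)"
    and extends: "\<forall>x\<in>P. \<psi>' x = \<psi> (\<alpha> x)"
  shows "\<alpha> \<in> normalizer_fs G F A P P"
proof -
  note PA = set_mult_central[OF P A]
  have Q: "subgroup (\<psi> ` (P <#> A)) G"
    using F_image_subgroup[OF PA(1) subgroup_self \<psi>(1)] .
  define \<rho> where "\<rho> = restrict (inv_into (P <#> A) \<psi>) (\<psi> ` (P <#> A))"
  have \<rho>: "\<rho> \<in> F (\<psi> ` (P <#> A)) (P <#> A)"
    using F_inverse[OF PA(1) subgroup_self \<psi>(1)] unfolding \<rho>_def .
  have \<rho>_\<psi>: "\<rho> (\<psi> y) = y" if "y \<in> P <#> A" for y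
    using F_inj_hom[OF PA(1) subgroup_self \<psi>(1)] that unfolding \<rho>_def inj_hom_def by auto
  define \<chi> where "\<chi> = compose (P <#> A) \<rho> \<psi>'"
  have "\<psi>' \<in> F (P <#> A) (\<psi> ` (P <#> A))"
    using F_corestrict[OF PA(1) subgroup_self Q \<psi>'(1)] \<psi>'(3) by simp
  then have \<chi>: "\<chi> \<in> F (P <#> A) (P <#> A)"
    unfolding \<chi>_def using F_comp[OF PA(1) Q PA(1) _ \<rho>] by blast
  have \<chi>_\<alpha>: "\<forall>x\<in>P. \<chi> x = \<alpha> x"
  proof
    fix x assume "x \<in> P"
    then have "\<alpha> x \<in> P"
      using F_inj_hom[OF P P \<alpha>] unfolding inj_hom_def by blast
    then show "\<chi> x = \<alpha> x"
      unfolding \<chi>_def compose_def using \<open>x \<in> P\<close> extends PA(2) \<rho>_\<psi> by auto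
  qed
  have "\<chi> ` A \<subseteq> A"
  proof (rule image_subsetI)
    fix a assume "a \<in> A"
    then have "\<psi>' a \<in> \<psi> ` A"
      using \<psi>(2) \<psi>'(2) by (metis imageI)
    then obtain a' where "a' \<in> A" "\<psi>' a = \<psi> a'"
      by blast
    then show "\<chi> a \<in> A"
      unfolding \<chi>_def compose_def using \<open>a \<in> A\<close> PA(3) \<rho>_\<psi> by auto
  qed
  then show ?thesis
    unfolding normalizer_fs_def using \<alpha> \<chi> \<chi>_\<alpha> by blast
qed

lemma weakly_closed_image:
  assumes "weakly_closed G F A" "subgroup N G" "A \<subseteq> N" "\<psi> \<in> F N (carrier G)"
  shows "\<psi> ` A = A"
proof -
  have A: "subgroup A G"
    using assms(1) unfolding weakly_closed_def by blast
  have "restrict \<psi> A \<in> F A (carrier G)"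
    using F_restrict[OF A assms(2) subgroup_self assms(3,4)] .
  moreover have "restrict \<psi> A ` A = \<psi> ` A"
    by auto
  ultimately have "fconj G F A (\<psi> ` A)"
    unfolding fconj_def using A F_onto_image F_image_subgroup subgroup_self by metis
  then show ?thesis
    using assms(1) unfolding weakly_closed_def by blast
qed

end

locale saturated_fusion = fusion +
  fixes p :: nat
  assumes saturated: "saturated p G F"
    and finite_carrier: "finite (carrier G)"
begin

lemma extension_axiom:
  "subgroup P G \<Longrightarrow> \<phi> \<in> F P (carrier G) \<Longrightarrow> fully_centralized G F (\<phi> ` P) \<Longrightarrow>
    \<exists>\<psi>\<in>F (N_phi G P \<phi>) (carrier G). \<forall>x\<in>P. \<psi> x = \<phi> x"
  using saturated unfolding saturated_def by blast

lemma ex_fully_centralized_fconj: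
  assumes "subgroup P G"
  obtains P' where "fconj G F P P'" "fully_centralized G F P'"
proof -
  have "card (centralizer G Q) < Suc (card (carrier G))" for Q
    using card_mono[OF finite_carrier, of "centralizer G Q"] unfolding centralizer_def by auto
  then obtain P' where "fconj G F P P'"
    and max: "\<forall>Q. fconj G F P Q \<longrightarrow> card (centralizer G Q) \<le> card (centralizer G P')"
    using Lattices_Big.ex_has_greatest_nat[of "fconj G F P" P "\<lambda>Q. card (centralizer G Q)"]
      fconj_refl[OF assms] by blast
  moreover from this have "fully_centralized G F P'"
    unfolding fully_centralized_def using fconj_trans by blast
  ultimately show ?thesis
    using that by blast
qed

lemma extension_over_central:
  assumes A: "subgroup A G" "A \<subseteq> center G (carrier G)" "weakly_closed G F A"
    and P: "subgroup P G" and \<phi>: "\<phi> \<in> F P (carrier G)"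
    and fc: "fully_centralized G F (\<phi> ` P)"
  obtains \<psi> where "\<psi> \<in> F (P <#> A) (carrier G)" "\<forall>x\<in>P. \<psi> x = \<phi> x"
    "\<psi> ` A = A" "\<psi> ` (P <#> A) = \<phi> ` P <#> A"
proof -
  have \<phi>_hom: "\<phi> \<in> inj_hom G P (carrier G)"
    using F_inj_hom[OF P subgroup_self \<phi>] .
  obtain \<psi>0 where \<psi>0: "\<psi>0 \<in> F (N_phi G P \<phi>) (carrier G)" and ext: "\<forall>x\<in>P. \<psi>0 x = \<phi> x"
    using extension_axiom[OF P \<phi> fc] by blast
  have "\<phi> ` P \<subseteq> carrier G"
    using \<phi>_hom unfolding inj_hom_def by blast
  then have N: "subgroup (N_phi G P \<phi>) G"
    using N_phi_subgroup[OF subgroup.subset[OF P]] by blast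
  note PA = set_mult_central[OF P A(1,2)]
  define \<psi> where "\<psi> = restrict \<psi>0 (P <#> A)"
  have \<psi>: "\<psi> \<in> F (P <#> A) (carrier G)"
    unfolding \<psi>_def
    using F_restrict[OF PA(1) N subgroup_self set_mult_central_subset_N_phi[OF P A(1,2) \<phi>_hom] \<psi>0] .
  have agree: "\<forall>x\<in>P. \<psi> x = \<phi> x"
    using ext PA(2) unfolding \<psi>_def by auto
  have "\<psi> ` A = A"
    using weakly_closed_image[OF A(3) PA(1) PA(3) \<psi>] .
  moreover have "\<psi> ` (P <#> A) = \<phi> ` P <#> A"
  proof -
    have "\<psi> ` (P <#> A) = \<psi> ` P <#> \<psi> ` A"
      using inj_hom_image_set_mult[OF PA(1) F_inj_hom[OF PA(1) subgroup_self \<psi>] PA(2,3)] .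
    moreover have "\<psi> ` P = \<phi> ` P"
      using agree by simp
    ultimately show ?thesis
      using \<open>\<psi> ` A = A\<close> by simp
  qed
  ultimately show ?thesis
    using that[OF \<psi> agree] by blast
qed

lemma aut_in_normalizer_fs_central:
  assumes A: "subgroup A G" "A \<subseteq> center G (carrier G)" "weakly_closed G F A"
    and P: "subgroup P G" and \<alpha>: "\<alpha> \<in> F P P"
  shows "\<alpha> \<in> normalizer_fs G F A P P"
proof -
  obtain P' where "fconj G F P P'" and fc: "fully_centralized G F P'"
    using ex_fully_centralized_fconj[OF P] .
  then obtain \<phi> where \<phi>: "\<phi> \<in> F P P'" "\<phi> ` P = P'" and P': "subgroup P' G"
    unfolding fconj_def by blast
  have \<phi>C: "\<phi> \<in> F P (carrier G)"
    using F_corestrict[OF P P' subgroup_self \<phi>(1)] \<phi>(2) subgroup.subset[OF P'] by blast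
  have "\<alpha> ` P \<subseteq> P" "inj_on \<alpha> P"
    using F_inj_hom[OF P P \<alpha>] unfolding inj_hom_def by auto
  then have "\<alpha> ` P = P"
    using endo_inj_surj finite_subset[OF subgroup.subset[OF P] finite_carrier] by blast
  define \<phi>\<alpha> where "\<phi>\<alpha> = compose P \<phi> \<alpha>"
  have \<phi>\<alpha>C: "\<phi>\<alpha> \<in> F P (carrier G)"
    unfolding \<phi>\<alpha>_def using F_comp[OF P P subgroup_self \<alpha> \<phi>C] .
  have "\<phi>\<alpha> ` P = \<phi> ` \<alpha> ` P"
    unfolding \<phi>\<alpha>_def compose_def by (simp add: image_image)
  then have "\<phi>\<alpha> ` P = P'"
    using \<open>\<alpha> ` P = P\<close> \<phi>(2) by simp
  obtain \<psi> where \<psi>: "\<psi> \<in> F (P <#> A) (carrier G)" "\<forall>x\<in>P. \<psi> x = \<phi> x"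
      "\<psi> ` A = A" "\<psi> ` (P <#> A) = P' <#> A"
    using extension_over_central[OF A P \<phi>C] fc unfolding \<phi>(2) by blast
  obtain \<psi>' where \<psi>': "\<psi>' \<in> F (P <#> A) (carrier G)" "\<forall>x\<in>P. \<psi>' x = \<phi>\<alpha> x"
      "\<psi>' ` A = A" "\<psi>' ` (P <#> A) = P' <#> A"
    using extension_over_central[OF A P \<phi>\<alpha>C] fc unfolding \<open>\<phi>\<alpha> ` P = P'\<close> by blast
  have "\<forall>x\<in>P. \<psi>' x = \<psi> (\<alpha> x)"
    using \<psi>(2) \<psi>'(2) \<open>\<alpha> ` P \<subseteq> P\<close> unfolding \<phi>\<alpha>_def compose_def by auto
  then show ?thesis
    using aut_in_normalizer_fs_of_extensions[OF P A(1,2) \<alpha> \<psi>(1,3) \<psi>'(1,3)] \<psi>(4) \<psi>'(4) by simp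
qed

end

lemma focal_cong:
  assumes "\<And>P. subgroup P S \<Longrightarrow> P \<subseteq> T \<Longrightarrow> E P P = E' P P"
  shows "focal S T E = focal S T E'"
proof -
  have "{inv\<^bsub>S\<^esub> g \<otimes>\<^bsub>S\<^esub> \<alpha> g | g P \<alpha>. subgroup P S \<and> P \<subseteq> T \<and> g \<in> P \<and> \<alpha> \<in> E P P} =
        {inv\<^bsub>S\<^esub> g \<otimes>\<^bsub>S\<^esub> \<alpha> g | g P \<alpha>. subgroup P S \<and> P \<subseteq> T \<and> g \<in> P \<and> \<alpha> \<in> E' P P}"
    using assms by blast
  then show ?thesis
    unfolding focal_def by simp
qed

theorem proposition4p7:
  fixes S :: "('a, 'b) monoid_scheme"
    and F :: "'a set \<Rightarrow> 'a set \<Rightarrow> ('a \<Rightarrow> 'a) set"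
    and Mor :: "'a set \<Rightarrow> 'a set \<Rightarrow> 'm set"
  assumes "p_local_finite_group p S F Mor cmp idm proj delta"
    and "subgroup A S" and "A \<subseteq> center S (carrier S)"
    and "weakly_closed S F A"
  shows "focal S (carrier S) F = focal S (normalizer S A) (normalizer_fs S F A)"
proof -
  have "group S" "finite (carrier S)" "saturated p S F"
    using assms(1) unfolding p_local_finite_group_def p_group_def by blast+
  then interpret saturated_fusion S F p
    by (intro saturated_fusion.intro fusion.intro fusion_axioms.intro saturated_fusion_axioms.intro)
      (simp_all add: saturated_def)
  have "F P P = normalizer_fs S F A P P" if "subgroup P S" for P
    using aut_in_normalizer_fs_central[OF assms(2-4) that] unfolding normalizer_fs_def by blast
  then show ?thesis
    unfolding normalizer_central[OF assms(3)] by (intro focal_cong)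
qed

end
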